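(* Let $J=\begin{bmatrix}0&I_m\\-I_m&0\end{bmatrix}$, let $H\in\mathbb{R}^{2m\times2m}$ be symmetric positive definite, and let $A=JH$, $y_0\in\mathbb{R}^{2m}$. Let $V_n\in\mathbb{R}^{2m\times n}$ be the matrix whose columns are the $H$-orthonormal basis of the Krylov subspace $\mathcal{K}_n(A,y_0)=\mathrm{span}\{y_0,Ay_0,\dots,A^{n-1}y_0\}$ produced by the Arnoldi algorithm run with the inner product $\langle x,y\rangle_H=x^THy$ (so $V_n^THV_n=I_n$), and let $H_n=V_n^THAV_n$ be the corresponding $n\times n$ upper Hessenberg matrix. Define $y_H(t)=V_nz(t)$, where $\dot z=H_nz$, $z(0)=V_n^THy_0$. Then for every $k=0,1,\dots,r$ with $r=\lfloor n/2\rfloor-1$, the quantity $$\mathcal{H}_k(y_H)=\tfrac12\, y_H^T H V_n (H_n)^{2k} V_n^T H y_H$$ is constant in $t$ along $y_H(t)$.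
   Context: The Arnoldi algorithm with inner product $\langle\cdot,\cdot\rangle_H$: $v_1=y_0/\langle y_0,y_0\rangle_H^{1/2}$; for $j=1,\dots,n$: $w_j=Av_j$, $h_{i,j}=\langle v_i,w_j\rangle_H$ and $w_j\leftarrow w_j-h_{i,j}v_i$ for $i\le j$, $h_{j+1,j}=\langle w_j,w_j\rangle_H^{1/2}$, $v_{j+1}=w_j/h_{j+1,j}$ (assumed no breakdown). $V_n=[v_1,\dots,v_n]$, $H_n=(h_{i,j})_{i,j\le n}$, and $AV_n=V_nH_n+h_{n+1,n}v_{n+1}e_n^T$ with $V_n^THv_{n+1}=0$. *)

theory Defs
  imports Complex_Main "Jordan_Normal_Form.Matrix"
begin

definition Jmat :: "nat \<Rightarrow> real mat" where
  "Jmat m = mat (2*m) (2*m) (\<lambda>(i,j).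
      if i < m \<and> j \<ge> m \<and> j - m = i then 1
      else if i \<ge> m \<and> j < m \<and> i - m = j then -1 else 0)"

definition ipH :: "real mat \<Rightarrow> real vec \<Rightarrow> real vec \<Rightarrow> real" where
  "ipH H x y = x \<bullet> (H *\<^sub>v y)"

text \<open>Modified Gram-Schmidt sweep of the Arnoldi step: for i = 1..j,
  h_{i,j} = <v_i, w>_H and w := w - h_{i,j} v_i.\<close>
definition mgs :: "real mat \<Rightarrow> real vec list \<Rightarrow> real vec \<Rightarrow> real vec" where
  "mgs H vs w = foldl (\<lambda>w v. w - ipH H v w \<cdot>\<^sub>v v) w vs"

fun arnoldi_basis :: "real mat \<Rightarrow> real mat \<Rightarrow> real vec \<Rightarrow> nat \<Rightarrow> real vec list" where
  "arnoldi_basis H A y0 0 = []"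
| "arnoldi_basis H A y0 (Suc 0) = [(1 / sqrt (ipH H y0 y0)) \<cdot>\<^sub>v y0]"
| "arnoldi_basis H A y0 (Suc (Suc j)) =
     (let vs = arnoldi_basis H A y0 (Suc j);
          w = mgs H vs (A *\<^sub>v last vs)
      in vs @ [(1 / sqrt (ipH H w w)) \<cdot>\<^sub>v w])"

text \<open>The orthogonalised vector w_j (before normalisation) of step j (j >= 1);
  h_{j+1,j} = sqrt <w_j,w_j>_H.\<close>
definition arnoldi_w :: "real mat \<Rightarrow> real mat \<Rightarrow> real vec \<Rightarrow> nat \<Rightarrow> real vec" where
  "arnoldi_w H A y0 j = (let vs = arnoldi_basis H A y0 j in mgs H vs (A *\<^sub>v last vs))"

definition arnoldi_h_sub :: "real mat \<Rightarrow> real mat \<Rightarrow> real vec \<Rightarrow> nat \<Rightarrow> real" where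
  "arnoldi_h_sub H A y0 j = sqrt (ipH H (arnoldi_w H A y0 j) (arnoldi_w H A y0 j))"

definition arnoldi_V :: "nat \<Rightarrow> real mat \<Rightarrow> real mat \<Rightarrow> real vec \<Rightarrow> nat \<Rightarrow> real mat" where
  "arnoldi_V d H A y0 n = mat_of_cols d (arnoldi_basis H A y0 n)"

definition arnoldi_Hn :: "nat \<Rightarrow> real mat \<Rightarrow> real mat \<Rightarrow> real vec \<Rightarrow> nat \<Rightarrow> real mat" where
  "arnoldi_Hn d H A y0 n = (let V = arnoldi_V d H A y0 n in V\<^sup>T * H * A * V)"

end

theory Submission
  imports Defs
begin

text \<open>The Arnoldi vectors are \<open>H\<close>-orthonormal, so \<open>V\<^sub>n\<^sup>T H V\<^sub>n = I\<close> and
  \<open>H\<^sub>n = V\<^sub>n\<^sup>T (H J H) V\<^sub>n\<close> is skew-symmetric, because \<open>H J H\<close> is.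
  Along \<open>z' = M z\<close> with \<open>M\<close> skew, the quadratic form of any \<open>P\<close> commuting with \<open>M\<close>
  has derivative \<open>z\<^sup>T (M\<^sup>T P + P M) z = z\<^sup>T (P M - M P) z = 0\<close>; take \<open>P = H\<^sub>n\<^sup>2\<^sup>k\<close>.
  Finally \<open>V\<^sub>n\<^sup>T H V\<^sub>n = I\<close> collapses \<open>\<H>\<^sub>k(V\<^sub>n z)\<close> to \<open>z\<^sup>T H\<^sub>n\<^sup>2\<^sup>k z / 2\<close>.\<close>

lemma ipH_sym:
  assumes "H \<in> carrier_mat d d" "H\<^sup>T = H" "x \<in> carrier_vec d" "y \<in> carrier_vec d"
  shows "ipH H x y = ipH H y x"
proof -
  have "x \<bullet> (H *\<^sub>v y) = (H\<^sup>T *\<^sub>v x) \<bullet> y"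
    using transpose_vec_mult_scalar[OF assms(1) assms(4) assms(3)] by simp
  also have "\<dots> = y \<bullet> (H *\<^sub>v x)" using assms by (simp add: comm_scalar_prod[of _ d])
  finally show ?thesis unfolding ipH_def .
qed

lemma ipH_diff_smult_right:
  assumes "H \<in> carrier_mat d d" "u \<in> carrier_vec d" "a \<in> carrier_vec d" "b \<in> carrier_vec d"
  shows "ipH H u (a - c \<cdot>\<^sub>v b) = ipH H u a - c * ipH H u b"
  using assms unfolding ipH_def
  by (simp add: mult_minus_distrib_mat_vec[of _ d d] mult_mat_vec[of _ d d]
        scalar_prod_minus_distrib[of _ d])

lemma ipH_smult_right:
  assumes "H \<in> carrier_mat d d" "u \<in> carrier_vec d" "a \<in> carrier_vec d"
  shows "ipH H u (c \<cdot>\<^sub>v a) = c * ipH H u a"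
  using assms unfolding ipH_def by (simp add: mult_mat_vec[of _ d d])

lemma ipH_smult_left:
  assumes "H \<in> carrier_mat d d" "u \<in> carrier_vec d" "a \<in> carrier_vec d"
  shows "ipH H (c \<cdot>\<^sub>v u) a = c * ipH H u a"
  using assms unfolding ipH_def by simp

lemma ipH_nonneg:
  assumes "\<forall>x\<in>carrier_vec d. x \<noteq> 0\<^sub>v d \<longrightarrow> x \<bullet> (H *\<^sub>v x) > 0"
    and "H \<in> carrier_mat d d" and "x \<in> carrier_vec d"
  shows "ipH H x x \<ge> 0"
  using assms unfolding ipH_def by (cases "x = 0\<^sub>v d") (auto intro: less_imp_le)

definition H_orthonormal :: "real mat \<Rightarrow> real vec list \<Rightarrow> bool" where
  "H_orthonormal H vs \<longleftrightarrow>
     (\<forall>i<length vs. \<forall>j<length vs. ipH H (vs!i) (vs!j) = (if i = j then 1 else 0))"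

lemma H_orthonormal_Nil [simp]: "H_orthonormal H []"
  by (simp add: H_orthonormal_def)

lemma H_orthonormal_snoc:
  "H_orthonormal H (vs @ [v]) \<longleftrightarrow> H_orthonormal H vs \<and> ipH H v v = 1 \<and>
     (\<forall>u\<in>set vs. ipH H u v = 0 \<and> ipH H v u = 0)"
  (is "?L \<longleftrightarrow> ?R")
proof
  assume ?L
  then have entry: "ipH H ((vs @ [v]) ! i) ((vs @ [v]) ! j) = (if i = j then 1 else 0)"
    if "i \<le> length vs" "j \<le> length vs" for i j
    using that unfolding H_orthonormal_def by (simp add: less_Suc_eq_le)
  have "ipH H u v = 0 \<and> ipH H v u = 0" if "u \<in> set vs" for u
  proof -
    from that obtain i where "i < length vs" "u = vs ! i" unfolding in_set_conv_nth by blast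
    then show ?thesis using entry[of i "length vs"] entry[of "length vs" i] by (simp add: nth_append)
  qed
  moreover have "H_orthonormal H vs"
    unfolding H_orthonormal_def
  proof (intro allI impI)
    fix i j assume "i < length vs" "j < length vs"
    then show "ipH H (vs ! i) (vs ! j) = (if i = j then 1 else 0)"
      using entry[of i j] by (simp add: nth_append)
  qed
  ultimately show ?R using entry[of "length vs" "length vs"] by simp
next
  assume ?R
  then show ?L
    unfolding H_orthonormal_def by (auto simp: nth_append less_Suc_eq)
qed

lemma mgs_carrier:
  assumes "H \<in> carrier_mat d d" "set vs \<subseteq> carrier_vec d" "w \<in> carrier_vec d"
  shows "mgs H vs w \<in> carrier_vec d"
  using assms(2,3) by (induction vs arbitrary: w) (auto simp: mgs_def)

lemma mgs_H_orthogonal: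
  assumes H: "H \<in> carrier_mat d d"
  shows "H_orthonormal H vs \<Longrightarrow> set vs \<subseteq> carrier_vec d \<Longrightarrow> w \<in> carrier_vec d \<Longrightarrow>
    \<forall>u\<in>set vs. ipH H u (mgs H vs w) = 0"
proof (induction vs rule: rev_induct)
  case Nil
  then show ?case by simp
next
  case (snoc v vs)
  define w' where "w' = mgs H vs w"
  have w': "w' \<in> carrier_vec d" unfolding w'_def using mgs_carrier[OF H] snoc.prems by simp
  have orth: "H_orthonormal H vs" "ipH H v v = 1" "\<forall>u\<in>set vs. ipH H u v = 0"
    using snoc.prems(1) by (auto simp: H_orthonormal_snoc)
  have IH: "\<forall>u\<in>set vs. ipH H u w' = 0"
    unfolding w'_def using snoc.IH orth(1) snoc.prems(2,3) by simp
  have step: "mgs H (vs @ [v]) w = w' - ipH H v w' \<cdot>\<^sub>v v"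
    by (simp add: mgs_def w'_def)
  have "ipH H u (w' - ipH H v w' \<cdot>\<^sub>v v) = ipH H u w' - ipH H v w' * ipH H u v"
    if "u \<in> set (vs @ [v])" for u
    using ipH_diff_smult_right[OF H _ w'] that snoc.prems(2) by auto
  then show ?case unfolding step using IH orth by auto
qed

lemma H_orthonormal_snoc_normalized:
  assumes H: "H \<in> carrier_mat d d" and H_sym: "H\<^sup>T = H"
    and vs: "H_orthonormal H vs" "set vs \<subseteq> carrier_vec d" and w: "w \<in> carrier_vec d"
    and perp: "\<forall>u\<in>set vs. ipH H u w = 0" and pos: "ipH H w w > 0"
  shows "H_orthonormal H (vs @ [(1 / sqrt (ipH H w w)) \<cdot>\<^sub>v w])"
proof -
  define c where "c = 1 / sqrt (ipH H w w)"
  have "c * c * ipH H w w = 1" unfolding c_def using pos by (simp add: field_simps)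
  then have unit: "ipH H (c \<cdot>\<^sub>v w) (c \<cdot>\<^sub>v w) = 1"
    using ipH_smult_left[OF H w] ipH_smult_right[OF H w w] w by (simp add: mult.assoc)
  have "ipH H u (c \<cdot>\<^sub>v w) = 0 \<and> ipH H (c \<cdot>\<^sub>v w) u = 0" if "u \<in> set vs" for u
  proof -
    have u: "u \<in> carrier_vec d" using that vs(2) by auto
    then have "ipH H u (c \<cdot>\<^sub>v w) = 0" using ipH_smult_right[OF H u w] perp that by simp
    then show ?thesis using ipH_sym[OF H H_sym u, of "c \<cdot>\<^sub>v w"] w by simp
  qed
  then show ?thesis unfolding c_def[symmetric] H_orthonormal_snoc using vs(1) unit by blast
qed

lemma arnoldi_basis_H_orthonormal:
  assumes H: "H \<in> carrier_mat d d" and H_sym: "H\<^sup>T = H"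
    and H_posdef: "\<forall>x\<in>carrier_vec d. x \<noteq> 0\<^sub>v d \<longrightarrow> x \<bullet> (H *\<^sub>v x) > 0"
    and A: "A \<in> carrier_mat d d" and y0: "y0 \<in> carrier_vec d" "y0 \<noteq> 0\<^sub>v d"
  shows "\<forall>j\<in>{1..<k}. arnoldi_h_sub H A y0 j \<noteq> 0 \<Longrightarrow>
    length (arnoldi_basis H A y0 k) = k \<and> set (arnoldi_basis H A y0 k) \<subseteq> carrier_vec d \<and>
    H_orthonormal H (arnoldi_basis H A y0 k)"
proof (induction k rule: induct_nat_012)
  case 0
  then show ?case by simp
next
  case 1
  have "ipH H y0 y0 > 0" using H_posdef y0 unfolding ipH_def by auto
  then have "H_orthonormal H ([] @ [(1 / sqrt (ipH H y0 y0)) \<cdot>\<^sub>v y0])"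
    by (intro H_orthonormal_snoc_normalized[OF H H_sym]) (use y0 in auto)
  then show ?case using y0(1) by simp
next
  case (ge2 j)
  define vs where "vs = arnoldi_basis H A y0 (Suc j)"
  define w where "w = mgs H vs (A *\<^sub>v last vs)"
  have vs: "length vs = Suc j" "set vs \<subseteq> carrier_vec d" "H_orthonormal H vs"
    using ge2 unfolding vs_def by auto
  then have "last vs \<in> carrier_vec d" by (metis last_in_set list.size(3) nat.distinct(1) subsetD)
  then have w: "w \<in> carrier_vec d" and perp: "\<forall>u\<in>set vs. ipH H u w = 0"
    unfolding w_def using mgs_carrier[OF H] mgs_H_orthogonal[OF H] A vs by auto
  have "sqrt (ipH H w w) \<noteq> 0"
    using ge2.prems unfolding arnoldi_h_sub_def arnoldi_w_def w_def vs_def Let_def by auto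
  then have "ipH H w w > 0" using ipH_nonneg[OF H_posdef H w] by simp
  from H_orthonormal_snoc_normalized[OF H H_sym vs(3,2) w perp this]
  have "H_orthonormal H (vs @ [(1 / sqrt (ipH H w w)) \<cdot>\<^sub>v w])" .
  moreover have "arnoldi_basis H A y0 (Suc (Suc j)) = vs @ [(1 / sqrt (ipH H w w)) \<cdot>\<^sub>v w]"
    unfolding vs_def w_def by (simp add: Let_def)
  ultimately show ?case using vs w by simp
qed

lemma H_orthonormal_gram_eq_one:
  assumes H: "H \<in> carrier_mat d d" and vs: "set vs \<subseteq> carrier_vec d" "H_orthonormal H vs"
  shows "(mat_of_cols d vs)\<^sup>T * H * mat_of_cols d vs = 1\<^sub>m (length vs)"
proof -
  let ?V = "mat_of_cols d vs"
  have V: "?V \<in> carrier_mat d (length vs)" by simp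
  have "?V\<^sup>T * H * ?V = ?V\<^sup>T * (H * ?V)" by (rule assoc_mult_mat) (use H V in auto)
  also have "\<dots> = 1\<^sub>m (length vs)"
  proof (rule eq_matI)
    fix i j assume "i < dim_row (1\<^sub>m (length vs) :: real mat)" "j < dim_col (1\<^sub>m (length vs) :: real mat)"
    then have ij: "i < length vs" "j < length vs" by auto
    then have "(?V\<^sup>T * (H * ?V)) $$ (i, j) = col ?V i \<bullet> (H *\<^sub>v col ?V j)"
      using H by (simp add: col_mult2[OF H V])
    also have "\<dots> = ipH H (vs ! i) (vs ! j)"
      using ij vs(1) by (simp add: subsetD ipH_def)
    finally show "(?V\<^sup>T * (H * ?V)) $$ (i, j) = 1\<^sub>m (length vs) $$ (i, j)"
      using vs(2) ij unfolding H_orthonormal_def by simp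
  qed (use H in auto)
  finally show ?thesis .
qed

lemma Jmat_transpose: "(Jmat m)\<^sup>T = - Jmat m"
  by (rule eq_matI) (auto simp: Jmat_def)

lemma Jmat_congruence_skew:
  assumes H: "H \<in> carrier_mat (2*m) (2*m)" and H_sym: "H\<^sup>T = H"
  shows "(H * (Jmat m * H))\<^sup>T = - (H * (Jmat m * H))"
proof -
  have J: "Jmat m \<in> carrier_mat (2*m) (2*m)" by (simp add: Jmat_def)
  have "(H * (Jmat m * H))\<^sup>T = (Jmat m * H)\<^sup>T * H"
    using transpose_mult[OF H mult_carrier_mat[OF J H]] H_sym by simp
  also have "(Jmat m * H)\<^sup>T = - (H * Jmat m)"
    using transpose_mult[OF J H] H_sym H J by (simp add: Jmat_transpose)
  also have "- (H * Jmat m) * H = - (H * (Jmat m * H))"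
    using assoc_mult_mat[OF H J H] H J by simp
  finally show ?thesis .
qed

lemma congruence_skew:
  fixes K V :: "'a :: comm_ring_1 mat"
  assumes K: "K \<in> carrier_mat d d" "K\<^sup>T = - K" and V: "V \<in> carrier_mat d n"
  shows "(V\<^sup>T * K * V)\<^sup>T = - (V\<^sup>T * K * V)"
proof -
  have VK: "V\<^sup>T * K \<in> carrier_mat n d" using K V by simp
  have "(V\<^sup>T * K * V)\<^sup>T = V\<^sup>T * (K\<^sup>T * V)"
    using transpose_mult[OF VK V] transpose_mult[of "V\<^sup>T" n d K d] K V by simp
  also have "\<dots> = - (V\<^sup>T * K * V)"
    using assoc_mult_mat[of "V\<^sup>T" n d K d V n] K V by simp
  finally show ?thesis .
qed

lemma pow_mat_commute:
  assumes A: "A \<in> carrier_mat n n"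
  shows "A ^\<^sub>m k * A = A * A ^\<^sub>m k"
proof (induction k)
  case 0
  then show ?case using A by simp
next
  case (Suc k)
  have "A ^\<^sub>m Suc k * A = (A * A ^\<^sub>m k) * A" using Suc by simp
  also have "\<dots> = A * A ^\<^sub>m Suc k" using assoc_mult_mat[OF A pow_carrier_mat[OF A] A] by simp
  finally show ?case .
qed

lemma has_real_derivative_quadratic_form:
  fixes z z' :: "real \<Rightarrow> real vec"
  assumes z: "\<forall>s. z s \<in> carrier_vec n" and z': "z' t \<in> carrier_vec n"
    and M: "M \<in> carrier_mat n n"
    and deriv: "\<forall>i<n. ((\<lambda>s. z s $ i) has_real_derivative (z' t $ i)) (at t)"
  shows "((\<lambda>s. z s \<bullet> (M *\<^sub>v z s)) has_real_derivative
           (z' t \<bullet> (M *\<^sub>v z t) + z t \<bullet> (M *\<^sub>v z' t))) (at t)"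
proof -
  have expand: "x \<bullet> (M *\<^sub>v y) = (\<Sum>i<n. \<Sum>j<n. x $ i * (M $$ (i, j) * y $ j))"
    if "x \<in> carrier_vec n" "y \<in> carrier_vec n" for x y
    using that M by (simp add: scalar_prod_def sum_distrib_left row_def lessThan_atLeast0)
  have "((\<lambda>s. \<Sum>i<n. \<Sum>j<n. z s $ i * (M $$ (i, j) * z s $ j)) has_real_derivative
      (\<Sum>i<n. \<Sum>j<n. z' t $ i * (M $$ (i, j) * z t $ j) + z t $ i * (M $$ (i, j) * z' t $ j)))
      (at t)"
    using deriv by (auto intro!: DERIV_sum derivative_eq_intros simp: algebra_simps)
  then show ?thesis
    using expand z z' by (simp add: sum.distrib)
qed

lemma quadratic_form_conserved_skew_flow:
  fixes z :: "real \<Rightarrow> real vec"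
  assumes M: "M \<in> carrier_mat n n" "M\<^sup>T = - M"
    and P: "P \<in> carrier_mat n n" "P * M = M * P"
    and z: "\<forall>t. z t \<in> carrier_vec n"
    and ode: "\<forall>t. \<forall>i<n. ((\<lambda>s. z s $ i) has_real_derivative ((M *\<^sub>v z t) $ i)) (at t)"
  shows "z t \<bullet> (P *\<^sub>v z t) = z s \<bullet> (P *\<^sub>v z s)"
proof -
  have "((\<lambda>s. z s \<bullet> (P *\<^sub>v z s)) has_real_derivative 0) (at t)" for t
  proof -
    have zt: "z t \<in> carrier_vec n" using z by simp
    have Pz: "P *\<^sub>v z t \<in> carrier_vec n" using P(1) zt by simp
    have "(M *\<^sub>v z t) \<bullet> (P *\<^sub>v z t) = z t \<bullet> (M\<^sup>T *\<^sub>v (P *\<^sub>v z t))"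
      using transpose_vec_mult_scalar[of "M\<^sup>T" n n "P *\<^sub>v z t" "z t"] M(1) Pz zt by simp
    also have "\<dots> = - (z t \<bullet> (M *\<^sub>v (P *\<^sub>v z t)))"
      unfolding M(2)
      using uminus_mult_mat_vec[of "P *\<^sub>v z t" M] scalar_prod_uminus_right[of "z t" "M *\<^sub>v (P *\<^sub>v z t)"]
        M(1) P(1) zt by simp
    also have "M *\<^sub>v (P *\<^sub>v z t) = P *\<^sub>v (M *\<^sub>v z t)"
      using assoc_mult_mat_vec[OF M(1) P(1) zt] assoc_mult_mat_vec[OF P(1) M(1) zt] P(2) by simp
    finally have cancel: "(M *\<^sub>v z t) \<bullet> (P *\<^sub>v z t) + z t \<bullet> (P *\<^sub>v (M *\<^sub>v z t)) = 0"
      by simp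
    have "((\<lambda>s. z s \<bullet> (P *\<^sub>v z s)) has_real_derivative
        (M *\<^sub>v z t) \<bullet> (P *\<^sub>v z t) + z t \<bullet> (P *\<^sub>v (M *\<^sub>v z t))) (at t)"
      by (rule has_real_derivative_quadratic_form) (use z M(1) P(1) ode in auto)
    then show ?thesis unfolding cancel .
  qed
  then show ?thesis by (intro DERIV_isconst_all allI)
qed

lemma gram_eq_one_quadratic_form:
  fixes V H P :: "'a :: comm_semiring_1 mat"
  assumes V: "V \<in> carrier_mat d n" and H: "H \<in> carrier_mat d d" and G: "V\<^sup>T * H * V = 1\<^sub>m n"
    and P: "P \<in> carrier_mat n n" and x: "x \<in> carrier_vec n"
  shows "(V *\<^sub>v x) \<bullet> (H *\<^sub>v (V *\<^sub>v (P *\<^sub>v (V\<^sup>T *\<^sub>v (H *\<^sub>v (V *\<^sub>v x)))))) = x \<bullet> (P *\<^sub>v x)"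
proof -
  have recover: "V\<^sup>T *\<^sub>v (H *\<^sub>v (V *\<^sub>v y)) = y" if "y \<in> carrier_vec n" for y
  proof -
    have "V\<^sup>T *\<^sub>v (H *\<^sub>v (V *\<^sub>v y)) = (V\<^sup>T * H * V) *\<^sub>v y"
      using assoc_mult_mat_vec[of "V\<^sup>T * H" n d V n y] assoc_mult_mat_vec[of "V\<^sup>T" n d H d "V *\<^sub>v y"]
        V H that by simp
    then show ?thesis using G that by simp
  qed
  have Px: "P *\<^sub>v x \<in> carrier_vec n" using P x by simp
  have "(V *\<^sub>v x) \<bullet> (H *\<^sub>v (V *\<^sub>v (P *\<^sub>v x))) = (V\<^sup>T *\<^sub>v (H *\<^sub>v (V *\<^sub>v (P *\<^sub>v x)))) \<bullet> x"
    using transpose_vec_mult_scalar[OF V x, of "H *\<^sub>v (V *\<^sub>v (P *\<^sub>v x))"] V H Px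
      comm_scalar_prod[of "V *\<^sub>v x" d] x by simp
  then show ?thesis using recover[OF x] recover[OF Px] comm_scalar_prod[OF Px x] by simp
qed

lemma arnoldi_V_gram_eq_one:
  assumes H: "H \<in> carrier_mat d d" and H_sym: "H\<^sup>T = H"
    and H_posdef: "\<forall>x\<in>carrier_vec d. x \<noteq> 0\<^sub>v d \<longrightarrow> x \<bullet> (H *\<^sub>v x) > 0"
    and A: "A \<in> carrier_mat d d" and y0: "y0 \<in> carrier_vec d" "y0 \<noteq> 0\<^sub>v d"
    and no_breakdown: "\<forall>j\<in>{1..<n}. arnoldi_h_sub H A y0 j \<noteq> 0"
  shows "arnoldi_V d H A y0 n \<in> carrier_mat d n"
    and "(arnoldi_V d H A y0 n)\<^sup>T * H * arnoldi_V d H A y0 n = 1\<^sub>m n"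
proof -
  have basis: "length (arnoldi_basis H A y0 n) = n"
      "set (arnoldi_basis H A y0 n) \<subseteq> carrier_vec d" "H_orthonormal H (arnoldi_basis H A y0 n)"
    using arnoldi_basis_H_orthonormal[OF H H_sym H_posdef A y0 no_breakdown] by auto
  then show "arnoldi_V d H A y0 n \<in> carrier_mat d n"
    unfolding arnoldi_V_def using mat_of_cols_carrier(1) by metis
  show "(arnoldi_V d H A y0 n)\<^sup>T * H * arnoldi_V d H A y0 n = 1\<^sub>m n"
    unfolding arnoldi_V_def using H_orthonormal_gram_eq_one[OF H basis(2,3)] basis(1) by simp
qed

lemma arnoldi_Hn_skew:
  assumes H: "H \<in> carrier_mat (2*m) (2*m)" and H_sym: "H\<^sup>T = H"
    and V: "arnoldi_V (2*m) H (Jmat m * H) y0 n \<in> carrier_mat (2*m) n"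
  shows "arnoldi_Hn (2*m) H (Jmat m * H) y0 n \<in> carrier_mat n n"
    and "(arnoldi_Hn (2*m) H (Jmat m * H) y0 n)\<^sup>T = - arnoldi_Hn (2*m) H (Jmat m * H) y0 n"
proof -
  define V where "V = arnoldi_V (2*m) H (Jmat m * H) y0 n"
  have J: "Jmat m \<in> carrier_mat (2*m) (2*m)" by (simp add: Jmat_def)
  have "arnoldi_Hn (2*m) H (Jmat m * H) y0 n = V\<^sup>T * (H * (Jmat m * H)) * V"
    unfolding arnoldi_Hn_def V_def[symmetric] Let_def
    using assoc_mult_mat[of "V\<^sup>T" n "2*m" H "2*m" "Jmat m * H" "2*m"] V H J by (simp add: V_def)
  then show "arnoldi_Hn (2*m) H (Jmat m * H) y0 n \<in> carrier_mat n n"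
    and "(arnoldi_Hn (2*m) H (Jmat m * H) y0 n)\<^sup>T = - arnoldi_Hn (2*m) H (Jmat m * H) y0 n"
    using V H J by (auto simp: V_def intro!: congruence_skew Jmat_congruence_skew[OF H H_sym])
qed

theorem proposition2:
  fixes m n :: nat and H :: "real mat" and y0 :: "real vec" and z :: "real \<Rightarrow> real vec"
  assumes H_carrier: "H \<in> carrier_mat (2*m) (2*m)"
    and H_sym: "H\<^sup>T = H"
    and H_posdef: "\<forall>x \<in> carrier_vec (2*m). x \<noteq> 0\<^sub>v (2*m) \<longrightarrow> x \<bullet> (H *\<^sub>v x) > 0"
    and y0_dim: "y0 \<in> carrier_vec (2*m)"
    and y0_nz: "y0 \<noteq> 0\<^sub>v (2*m)"
    and no_breakdown: "\<forall>j \<in> {1..n}. arnoldi_h_sub H (Jmat m * H) y0 j \<noteq> 0"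
    and z_dim: "\<forall>t. z t \<in> carrier_vec n"
    and z_ode: "\<forall>t. \<forall>i < n. ((\<lambda>s. z s $ i) has_real_derivative
                    ((arnoldi_Hn (2*m) H (Jmat m * H) y0 n *\<^sub>v z t) $ i)) (at t)"
    and z_init: "z 0 = (arnoldi_V (2*m) H (Jmat m * H) y0 n)\<^sup>T *\<^sub>v (H *\<^sub>v y0)"
  shows "\<forall>k. k + 1 \<le> n div 2 \<longrightarrow> (\<forall>t.
     (let A = Jmat m * H; V = arnoldi_V (2*m) H A y0 n; Hn = arnoldi_Hn (2*m) H A y0 n;
          Hk = (\<lambda>y. (1/2) * (y \<bullet> (H *\<^sub>v (V *\<^sub>v ((Hn ^\<^sub>m (2*k)) *\<^sub>v (V\<^sup>T *\<^sub>v (H *\<^sub>v y)))))))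
      in Hk (V *\<^sub>v z t) = Hk (V *\<^sub>v z 0)))"
proof (intro allI impI)
  fix k :: nat and t :: real
  define V where "V = arnoldi_V (2*m) H (Jmat m * H) y0 n"
  define Hn where "Hn = arnoldi_Hn (2*m) H (Jmat m * H) y0 n"
  have J: "Jmat m \<in> carrier_mat (2*m) (2*m)" by (simp add: Jmat_def)
  have V: "V \<in> carrier_mat (2*m) n" and gram: "V\<^sup>T * H * V = 1\<^sub>m n"
    unfolding V_def using arnoldi_V_gram_eq_one[OF H_carrier H_sym H_posdef _ y0_dim y0_nz] J
      H_carrier no_breakdown by auto
  have Hn: "Hn \<in> carrier_mat n n" "Hn\<^sup>T = - Hn"
    unfolding Hn_def using arnoldi_Hn_skew[OF H_carrier H_sym] V unfolding V_def by auto
  have "z t \<bullet> (Hn ^\<^sub>m (2*k) *\<^sub>v z t) = z 0 \<bullet> (Hn ^\<^sub>m (2*k) *\<^sub>v z 0)"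
    using quadratic_form_conserved_skew_flow[OF Hn pow_carrier_mat[OF Hn(1)] pow_mat_commute[OF Hn(1)]]
      z_dim z_ode unfolding Hn_def by blast
  then show "let A = Jmat m * H; V = arnoldi_V (2*m) H A y0 n; Hn = arnoldi_Hn (2*m) H A y0 n;
      Hk = (\<lambda>y. (1/2) * (y \<bullet> (H *\<^sub>v (V *\<^sub>v ((Hn ^\<^sub>m (2*k)) *\<^sub>v (V\<^sup>T *\<^sub>v (H *\<^sub>v y)))))))
    in Hk (V *\<^sub>v z t) = Hk (V *\<^sub>v z 0)"
    unfolding Let_def V_def[symmetric] Hn_def[symmetric]
    using gram_eq_one_quadratic_form[OF V H_carrier gram pow_carrier_mat[OF Hn(1)]] z_dim by simp
qed

end
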